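(* For every $w\in\mathfrak S(n)$, $$g_w\in T_w+\sum_{w'\in\mathfrak S(n),\ w'<w}R[t_1,\ldots,t_n]\,T_{w'},$$ where $<$ is the (strict) Bruhat order on $\mathfrak S(n)$.
   Context: Standing setup: $R$ is an integral domain, $n\ge 2$, $r\ge 1$, and $q,u_1,\ldots,u_r\in R$ with $q$ invertible in $R$ and $\Delta:=\prod_{1\le j<i\le r}(u_i-u_j)$ invertible in $R$. For $1\le c\le r$ let $F_c(X)\in R[X]$ be the unique polynomial of degree $\le r-1$ with $F_c(u_{c'})=\delta_{c,c'}\Delta$ for all $1\le c'\le r$. The modified Ariki–Koike (Shoji) algebra $\mathcal H_{n,r}=\mathcal H_{n,r}(R,q,u_1,\ldots,u_r)$ is the associative $R$-algebra generated by $t_1,\ldots,t_n,T_1,\ldots,T_{n-1}$ subject to: $(T_i-q)(T_i+q^{-1})=0$; $(t_i-u_1)\cdots(t_i-u_r)=0$; $T_iT_{i+1}T_i=T_{i+1}T_iT_{i+1}$; $T_iT_j=T_jT_i$ for $|i-j|\ge2$; $t_it_j=t_jt_i$; $T_jt_k=t_kT_j$ for $k\ne j,j+1$; and for $2\le j\le n$: $T_{j-1}t_j=t_{j-1}T_{j-1}+\Delta^{-2}\sum_{1\le c_1<c_2\le r}(u_{c_2}-u_{c_1})(q-q^{-1})F_{c_1}(t_{j-1})F_{c_2}(t_j)$ and $T_{j-1}t_{j-1}=t_jT_{j-1}-\Delta^{-2}\sum_{1\le c_1<c_2\le r}(u_{c_2}-u_{c_1})(q-q^{-1})F_{c_1}(t_{j-1})F_{c_2}(t_j)$.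 Write $[1,r]=\{1,\ldots,r\}$; for $\mathbf k=(k_1,\ldots,k_n)\in[1,r]^n$ set $b_{\mathbf k}:=\prod_{i=1}^n\prod_{1\le j\le r,\,j\ne k_i}\frac{t_i-u_j}{u_{k_i}-u_j}$. For $1\le i,j\le n$ let $B'_{i,j}:=-(q-q^{-1})\sum_{\mathbf k,\ k_i<k_j}b_{\mathbf k}$, and for $1\le i\le n-1$ let $g_i:=T_i+B'_{i,i+1}$. For $w\in\mathfrak S(n)$ with reduced expression $w=s_{i_1}\cdots s_{i_l}$ ($s_i=(i\ i+1)$), set $T_w:=T_{i_1}\cdots T_{i_l}$ and $g_w:=g_{i_1}\cdots g_{i_l}$; both are independent of the reduced expression since the $T_i$ and the $g_i$ satisfy the braid relations. $R[t_1,\ldots,t_n]$ is the subalgebra generated by $t_1,\ldots,t_n$. *)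

theory Defs
  imports "HOL-Computational_Algebra.Polynomial" "HOL-Combinatorics.Permutations"
    "HOL-Combinatorics.Transposition" "HOL-Library.FuncSet"
begin

definition rinv :: "'r::idom \<Rightarrow> 'r" where
  "rinv x = (THE y. x * y = 1)"

definition Delta :: "nat \<Rightarrow> (nat \<Rightarrow> 'r::idom) \<Rightarrow> 'r" where
  "Delta r u = (\<Prod>(j,i)\<in>{(j,i). 1 \<le> j \<and> j < i \<and> i \<le> r}. u i - u j)"

definition Fpol :: "nat \<Rightarrow> (nat \<Rightarrow> 'r::idom) \<Rightarrow> nat \<Rightarrow> 'r poly" where
  "Fpol r u c = (THE p. degree p \<le> r - 1 \<and>
      (\<forall>c'\<in>{1..r}. poly p (u c') = (if c' = c then Delta r u else 0)))"

definition peval :: "('r::idom \<Rightarrow> 'a::ring_1) \<Rightarrow> 'r poly \<Rightarrow> 'a \<Rightarrow> 'a" where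
  "peval \<phi> p x = (\<Sum>i\<le>degree p. \<phi> (coeff p i) * x ^ i)"

definition mixterm :: "nat \<Rightarrow> 'r::idom \<Rightarrow> (nat \<Rightarrow> 'r) \<Rightarrow> ('r \<Rightarrow> 'a::ring_1)
    \<Rightarrow> (nat \<Rightarrow> 'a) \<Rightarrow> nat \<Rightarrow> 'a" where
  "mixterm r q u \<phi> t j = \<phi> ((rinv (Delta r u))^2) *
     (\<Sum>(c1,c2)\<in>{(c1,c2). 1 \<le> c1 \<and> c1 < c2 \<and> c2 \<le> r}.
        \<phi> ((u c2 - u c1) * (q - rinv q)) * peval \<phi> (Fpol r u c1) (t (j - 1))
          * peval \<phi> (Fpol r u c2) (t j))"

definition is_R_algebra :: "('r::idom \<Rightarrow> 'a::ring_1) \<Rightarrow> bool" where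
  "is_R_algebra \<phi> \<longleftrightarrow> \<phi> 1 = 1 \<and> (\<forall>x y. \<phi> (x + y) = \<phi> x + \<phi> y)
     \<and> (\<forall>x y. \<phi> (x * y) = \<phi> x * \<phi> y) \<and> (\<forall>x a. \<phi> x * a = a * \<phi> x)"

text \<open>t_1..t_n, T_1..T_{n-1} in A satisfy the defining relations of the modified
  Ariki-Koike (Shoji) algebra H_{n,r}(R,q,u_1,...,u_r).\<close>
definition shoji_relations :: "nat \<Rightarrow> nat \<Rightarrow> 'r::idom \<Rightarrow> (nat \<Rightarrow> 'r) \<Rightarrow> ('r \<Rightarrow> 'a::ring_1)
    \<Rightarrow> (nat \<Rightarrow> 'a) \<Rightarrow> (nat \<Rightarrow> 'a) \<Rightarrow> bool" where
  "shoji_relations n r q u \<phi> t T \<longleftrightarrow>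
     (\<forall>i\<in>{1..<n}. (T i - \<phi> q) * (T i + \<phi> (rinv q)) = 0)
   \<and> (\<forall>i\<in>{1..n}. prod_list (map (\<lambda>c. t i - \<phi> (u c)) [1..<r+1]) = 0)
   \<and> (\<forall>i. 1 \<le> i \<and> i + 1 < n \<longrightarrow> T i * T (i+1) * T i = T (i+1) * T i * T (i+1))
   \<and> (\<forall>i\<in>{1..<n}. \<forall>j\<in>{1..<n}. (i + 2 \<le> j \<or> j + 2 \<le> i) \<longrightarrow> T i * T j = T j * T i)
   \<and> (\<forall>i\<in>{1..n}. \<forall>j\<in>{1..n}. t i * t j = t j * t i)
   \<and> (\<forall>j\<in>{1..<n}. \<forall>k\<in>{1..n}. k \<noteq> j \<and> k \<noteq> j + 1 \<longrightarrow> T j * t k = t k * T j)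
   \<and> (\<forall>j\<in>{2..n}. T (j-1) * t j = t (j-1) * T (j-1) + mixterm r q u \<phi> t j)
   \<and> (\<forall>j\<in>{2..n}. T (j-1) * t (j-1) = t j * T (j-1) - mixterm r q u \<phi> t j)"

definition bk :: "nat \<Rightarrow> nat \<Rightarrow> (nat \<Rightarrow> 'r::idom) \<Rightarrow> ('r \<Rightarrow> 'a::ring_1)
    \<Rightarrow> (nat \<Rightarrow> 'a) \<Rightarrow> (nat \<Rightarrow> nat) \<Rightarrow> 'a" where
  "bk n r u \<phi> t k = prod_list (map (\<lambda>i. prod_list (map (\<lambda>j. (t i - \<phi> (u j)) * \<phi> (rinv (u (k i) - u j)))
        (filter (\<lambda>j. j \<noteq> k i) [1..<r+1]))) [1..<n+1])"

definition Bp :: "nat \<Rightarrow> nat \<Rightarrow> 'r::idom \<Rightarrow> (nat \<Rightarrow> 'r) \<Rightarrow> ('r \<Rightarrow> 'a::ring_1)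
    \<Rightarrow> (nat \<Rightarrow> 'a) \<Rightarrow> nat \<Rightarrow> nat \<Rightarrow> 'a" where
  "Bp n r q u \<phi> t i j = \<phi> (- (q - rinv q)) *
     (\<Sum>k\<in>{k \<in> {1..n} \<rightarrow>\<^sub>E {1..r}. k i < k j}. bk n r u \<phi> t k)"

definition gen :: "nat \<Rightarrow> nat \<Rightarrow> 'r::idom \<Rightarrow> (nat \<Rightarrow> 'r) \<Rightarrow> ('r \<Rightarrow> 'a::ring_1)
    \<Rightarrow> (nat \<Rightarrow> 'a) \<Rightarrow> (nat \<Rightarrow> 'a) \<Rightarrow> nat \<Rightarrow> 'a" where
  "gen n r q u \<phi> t T i = T i + Bp n r q u \<phi> t i (i + 1)"

definition is_word :: "nat \<Rightarrow> nat list \<Rightarrow> bool" where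
  "is_word n ws \<longleftrightarrow> set ws \<subseteq> {1..<n}"

definition sprod :: "nat list \<Rightarrow> nat \<Rightarrow> nat" where
  "sprod ws = foldr (\<lambda>i p. transpose i (Suc i) \<circ> p) ws id"

definition plen :: "nat \<Rightarrow> (nat \<Rightarrow> nat) \<Rightarrow> nat" where
  "plen n w = (LEAST l. \<exists>ws. is_word n ws \<and> length ws = l \<and> sprod ws = w)"

definition reduced :: "nat \<Rightarrow> nat list \<Rightarrow> (nat \<Rightarrow> nat) \<Rightarrow> bool" where
  "reduced n ws w \<longleftrightarrow> is_word n ws \<and> sprod ws = w \<and> length ws = plen n w"

definition redword :: "nat \<Rightarrow> (nat \<Rightarrow> nat) \<Rightarrow> nat list" where
  "redword n w = (SOME ws. reduced n ws w)"

definition Tw :: "nat \<Rightarrow> (nat \<Rightarrow> 'a::ring_1) \<Rightarrow> (nat \<Rightarrow> nat) \<Rightarrow> 'a" where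
  "Tw n T w = prod_list (map T (redword n w))"

definition gw :: "nat \<Rightarrow> nat \<Rightarrow> 'r::idom \<Rightarrow> (nat \<Rightarrow> 'r) \<Rightarrow> ('r \<Rightarrow> 'a::ring_1)
    \<Rightarrow> (nat \<Rightarrow> 'a) \<Rightarrow> (nat \<Rightarrow> 'a) \<Rightarrow> (nat \<Rightarrow> nat) \<Rightarrow> 'a" where
  "gw n r q u \<phi> t T w = prod_list (map (gen n r q u \<phi> t T) (redword n w))"

definition bruhat_step :: "nat \<Rightarrow> (nat \<Rightarrow> nat) \<Rightarrow> (nat \<Rightarrow> nat) \<Rightarrow> bool" where
  "bruhat_step n v v' \<longleftrightarrow> v permutes {1..n} \<and>
     (\<exists>a b. 1 \<le> a \<and> a < b \<and> b \<le> n \<and> v' = v \<circ> transpose a b) \<and> plen n v < plen n v'"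

definition bruhat_lt :: "nat \<Rightarrow> (nat \<Rightarrow> nat) \<Rightarrow> (nat \<Rightarrow> nat) \<Rightarrow> bool" where
  "bruhat_lt n = (bruhat_step n)\<^sup>+\<^sup>+"

inductive_set Rt :: "('r::idom \<Rightarrow> 'a::ring_1) \<Rightarrow> (nat \<Rightarrow> 'a) \<Rightarrow> nat \<Rightarrow> 'a set"
  for \<phi> t n where
  scal: "\<phi> c \<in> Rt \<phi> t n"
| gen_t: "i \<in> {1..n} \<Longrightarrow> t i \<in> Rt \<phi> t n"
| add: "x \<in> Rt \<phi> t n \<Longrightarrow> y \<in> Rt \<phi> t n \<Longrightarrow> x + y \<in> Rt \<phi> t n"
| mult: "x \<in> Rt \<phi> t n \<Longrightarrow> y \<in> Rt \<phi> t n \<Longrightarrow> x * y \<in> Rt \<phi> t n"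
| neg: "x \<in> Rt \<phi> t n \<Longrightarrow> - x \<in> Rt \<phi> t n"

end

theory Submission
  imports Defs
begin

text \<open>
  Induction along a reduced word: let \<open>w = s_i v\<close> with \<open>l(w) = l(v) + 1\<close> and
  \<open>g_v = T_v + X\<close>, where \<open>X\<close> lies in the \<open>R[t]\<close>-span of the \<open>T_v'\<close> with \<open>v' < v\<close>.
  Then \<open>g_w - T_w = T_i X + B T_v + B X\<close> with \<open>B = B'_{i,i+1} \<in> R[t]\<close>, and the last two
  terms are lower since \<open>v < w\<close>. For \<open>T_i X\<close>, the defining relations move \<open>T_i\<close> past
  \<open>R[t]\<close> up to a lower term (\<open>T_i f \<in> R[t] T_i + R[t]\<close>), and \<open>T_i T_v'\<close> equals \<open>T_{s_i v'}\<close>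
  or \<open>(q - q^-1) T_v' + T_{s_i v'}\<close>, because \<open>T_w\<close> does not depend on the reduced word
  (Matsumoto) and \<open>T_i\<close> satisfies the quadratic relation. The lifting property of the
  Bruhat order (\<open>v' < v < s_i v\<close> implies \<open>s_i v' < s_i v\<close>) keeps all these terms below \<open>w\<close>.
\<close>

section \<open>Inversions and reduced words\<close>

abbreviation simple :: "nat \<Rightarrow> nat \<Rightarrow> nat" where
  "simple i \<equiv> transpose i (Suc i)"

definition inversions :: "nat \<Rightarrow> (nat \<Rightarrow> nat) \<Rightarrow> (nat \<times> nat) set" where
  "inversions n x = {(p, q). 1 \<le> p \<and> p < q \<and> q \<le> n \<and> x q < x p}"

lemma finite_inversions [simp]: "finite (inversions n x)"
  by (rule finite_subset[of _ "{1..n} \<times> {1..n}"]) (auto simp: inversions_def)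

lemma simple_permutes: "i \<in> {1..<n} \<Longrightarrow> simple i permutes {1..n}"
  by (rule permutes_swap_id) auto

lemma simple_comp_permutes:
  "w permutes {1..n} \<Longrightarrow> i \<in> {1..<n} \<Longrightarrow> simple i \<circ> w permutes {1..n}"
  by (rule permutes_compose[OF _ simple_permutes])

lemma simple_simple_comp [simp]: "simple i \<circ> (simple i \<circ> f) = f"
  by (simp add: comp_assoc[symmetric])

lemma inv_simple_comp: "w permutes S \<Longrightarrow> inv (simple i \<circ> w) = inv w \<circ> simple i"
  by (simp add: o_inv_distrib permutes_bij)

lemma inv_Suc_neq:
  assumes "x permutes S" shows "inv x (Suc i) \<noteq> inv x i"
  by (metis assms n_not_Suc_n permutes_inverses(1))

lemma simple_less_iff:
  "y \<noteq> z \<Longrightarrow> simple i y < simple i z \<longleftrightarrow> (if {y, z} = {i, Suc i} then z < y else y < z)"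
  by (auto simp: transpose_def doubleton_eq_iff)

lemma inversions_simple_comp:
  assumes x: "x permutes {1..n}" and i: "i \<in> {1..<n}"
  defines "a \<equiv> inv x i" and "b \<equiv> inv x (Suc i)"
  shows "inversions n (simple i \<circ> x) =
    (if a < b then insert (a, b) (inversions n x) else inversions n x - {(b, a)})"
proof (rule set_eqI, clarify)
  fix p q
  have xab: "x a = i" "x b = Suc i" "a \<in> {1..n}" "b \<in> {1..n}"
    using x i permutes_in_image[OF permutes_inv[OF x]] unfolding a_def b_def
    by (auto simp: permutes_inverses)
  show "(p, q) \<in> inversions n (simple i \<circ> x) \<longleftrightarrow>
      (p, q) \<in> (if a < b then insert (a, b) (inversions n x) else inversions n x - {(b, a)})"
  proof (cases "{p, q} = {a, b}")
    case True
    then consider "p = a" "q = b" | "p = b" "q = a"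
      by (auto simp: doubleton_eq_iff)
    then show ?thesis
      by cases (use xab in \<open>auto simp: inversions_def\<close>)
  next
    case False
    then have "{x p, x q} \<noteq> {i, Suc i}"
      using permutes_inv_eq[OF x] unfolding a_def b_def doubleton_eq_iff by metis
    moreover have "x q \<noteq> x p" if "p \<noteq> q"
      using that permutes_inj[OF x] by (auto dest: injD)
    ultimately have "p \<noteq> q \<Longrightarrow> simple i (x q) < simple i (x p) \<longleftrightarrow> x q < x p"
      by (simp add: simple_less_iff insert_commute)
    with False show ?thesis
      by (auto simp: inversions_def)
  qed
qed

lemma card_inversions_simple_comp_ascent:
  assumes x: "x permutes {1..n}" and i: "i \<in> {1..<n}" and asc: "inv x i < inv x (Suc i)"
  shows "card (inversions n (simple i \<circ> x)) = Suc (card (inversions n x))"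
proof -
  have "(inv x i, inv x (Suc i)) \<notin> inversions n x"
    using x unfolding inversions_def by (simp add: permutes_inverses)
  with asc show ?thesis
    unfolding inversions_simple_comp[OF x i] by (simp add: card_insert_disjoint)
qed

lemma card_inversions_simple_comp_descent:
  assumes x: "x permutes {1..n}" and i: "i \<in> {1..<n}" and desc: "inv x (Suc i) < inv x i"
  shows "Suc (card (inversions n (simple i \<circ> x))) = card (inversions n x)"
proof -
  have "inv x i \<in> {1..n}" "inv x (Suc i) \<in> {1..n}"
    using i permutes_in_image[OF permutes_inv[OF x], of i]
      permutes_in_image[OF permutes_inv[OF x], of "Suc i"] by simp_all
  then have "(inv x (Suc i), inv x i) \<in> inversions n x"
    using desc unfolding inversions_def by (simp add: permutes_inverses[OF x])
  moreover have "inversions n (simple i \<circ> x) = inversions n x - {(inv x (Suc i), inv x i)}"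
    unfolding inversions_simple_comp[OF x i] using desc by simp
  ultimately show ?thesis
    by (simp only: card_Suc_Diff1[OF finite_inversions])
qed

lemma sprod_Nil [simp]: "sprod [] = id"
  by (simp add: sprod_def)

lemma sprod_Cons [simp]: "sprod (i # ws) = simple i \<circ> sprod ws"
  by (simp add: sprod_def)

lemma is_word_Nil [simp]: "is_word n []"
  by (simp add: is_word_def)

lemma is_word_Cons [simp]: "is_word n (i # ws) \<longleftrightarrow> i \<in> {1..<n} \<and> is_word n ws"
  by (simp add: is_word_def)

lemma sprod_permutes: "is_word n ws \<Longrightarrow> sprod ws permutes {1..n}"
proof (induction ws)
  case (Cons i ws)
  then have "sprod ws permutes {1..n}" "i \<in> {1..<n}"
    by simp_all
  then show ?case
    unfolding sprod_Cons by (rule simple_comp_permutes)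
qed (simp add: permutes_id)

lemma inversions_id [simp]: "inversions n id = {}"
  unfolding inversions_def by auto

lemma card_inversions_sprod_le: "is_word n ws \<Longrightarrow> card (inversions n (sprod ws)) \<le> length ws"
proof (induction ws)
  case Nil
  then show ?case using inversions_id[of n] by (simp add: id_def)
next
  case (Cons i ws)
  then have x: "sprod ws permutes {1..n}" and i: "i \<in> {1..<n}"
    and IH: "card (inversions n (sprod ws)) \<le> length ws"
    using sprod_permutes[of n ws] by simp_all
  have "card (inversions n (simple i \<circ> sprod ws)) \<le> Suc (card (inversions n (sprod ws)))"
  proof (cases "inv (sprod ws) i < inv (sprod ws) (Suc i)")
    case True
    then show ?thesis using card_inversions_simple_comp_ascent[OF x i] by simp
  next
    case False
    then have "inv (sprod ws) (Suc i) < inv (sprod ws) i"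
      using inv_Suc_neq[OF x, of i] by linarith
    then show ?thesis using card_inversions_simple_comp_descent[OF x i] by linarith
  qed
  with IH show ?case
    unfolding sprod_Cons length_Cons by linarith
qed

lemma permutes_strict_mono_eq_id:
  assumes y: "y permutes {1..n}" and mono: "\<forall>i\<in>{1..<n}. y i < y (Suc i)"
  shows "y = id"
proof
  have ge: "k \<le> y k" if "k \<in> {1..n}" for k
    using that
  proof (induction k)
    case (Suc k)
    show ?case
    proof (cases "k = 0")
      case True
      then show ?thesis using permutes_in_image[OF y, of 1] Suc.prems by simp
    next
      case False
      then have "k \<le> y k" "y k < y (Suc k)"
        using Suc mono by auto
      then show ?thesis by simp
    qed
  qed simp
  have "(\<Sum>k\<in>{1..n}. y k) = (\<Sum>k\<in>y ` {1..n}. k)"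
    by (simp add: sum.reindex[OF permutes_inj_on[OF y]])
  also have "\<dots> = (\<Sum>k\<in>{1..n}. k)"
    using permutes_image[OF y] by simp
  finally have "(\<Sum>k\<in>{1..n}. y k) = (\<Sum>k\<in>{1..n}. k)" .
  then have "y k = k" if "k \<in> {1..n}" for k
    using sum_mono_inv[of "\<lambda>k. k" "{1..n}" y k] ge that by simp
  then show "y k = id k" for k
    using y by (cases "k \<in> {1..n}") (simp_all add: permutes_not_in)
qed

lemma exists_word_of_card_inversions:
  "x permutes {1..n} \<Longrightarrow> \<exists>ws. is_word n ws \<and> sprod ws = x \<and> length ws = card (inversions n x)"
proof (induction "card (inversions n x)" arbitrary: x rule: less_induct)
  case less
  show ?case
  proof (cases "\<exists>i\<in>{1..<n}. inv x (Suc i) < inv x i")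
    case False
    then have "inv x = id"
      using permutes_strict_mono_eq_id[OF permutes_inv[OF less.prems]] inv_Suc_neq[OF less.prems]
      by (metis linorder_neqE_nat)
    then have "x = id"
      by (metis inv_id inv_inv_eq permutes_bij[OF less.prems])
    then show ?thesis
      by (intro exI[of _ "[]"]) simp
  next
    case True
    then obtain i where i: "i \<in> {1..<n}" "inv x (Suc i) < inv x i" by blast
    note simple_comp_permutes[OF less.prems i(1)]
    with less.hyps card_inversions_simple_comp_descent[OF less.prems i]
    obtain ws where "is_word n ws" "sprod ws = simple i \<circ> x"
      "length ws = card (inversions n (simple i \<circ> x))"
      by (metis lessI)
    with i card_inversions_simple_comp_descent[OF less.prems i] show ?thesis
      by (intro exI[of _ "i # ws"]) simp
  qed
qed

lemma plen_eq_card_inversions: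
  assumes "x permutes {1..n}" shows "plen n x = card (inversions n x)"
  unfolding plen_def
proof (rule Least_equality)
  show "\<exists>ws. is_word n ws \<and> length ws = card (inversions n x) \<and> sprod ws = x"
    using exists_word_of_card_inversions[OF assms] by auto
qed (use card_inversions_sprod_le in blast)

lemma reduced_iff:
  "reduced n ws w \<longleftrightarrow> is_word n ws \<and> sprod ws = w \<and> length ws = card (inversions n w)"
  unfolding reduced_def using plen_eq_card_inversions sprod_permutes by metis

lemma reduced_permutes: "reduced n ws w \<Longrightarrow> w permutes {1..n}"
  unfolding reduced_iff using sprod_permutes by blast

lemma reduced_redword: "x permutes {1..n} \<Longrightarrow> reduced n (redword n x) x"
  unfolding redword_def by (rule someI_ex) (use exists_word_of_card_inversions reduced_iff in blast)

text \<open>Words act by left multiplication, so \<open>s_i w < w\<close> (a left descent) is expressed as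
  \<open>inv w (Suc i) < inv w i\<close>.\<close>

lemma reduced_Cons_iff:
  "reduced n (i # ws) w \<longleftrightarrow>
     i \<in> {1..<n} \<and> w permutes {1..n} \<and> inv w (Suc i) < inv w i \<and> reduced n ws (simple i \<circ> w)"
proof
  assume "reduced n (i # ws) w"
  then have word: "is_word n (i # ws)" and prod: "sprod (i # ws) = w"
    and len: "Suc (length ws) = card (inversions n w)"
    unfolding reduced_iff by simp_all
  have i: "i \<in> {1..<n}" and "is_word n ws"
    using word by simp_all
  have w: "w permutes {1..n}"
    using sprod_permutes[OF word] prod by simp
  have ws: "sprod ws = simple i \<circ> w"
    using prod by auto
  have le: "card (inversions n (simple i \<circ> w)) \<le> length ws"
    using card_inversions_sprod_le[OF \<open>is_word n ws\<close>] ws by simp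
  have desc: "inv w (Suc i) < inv w i"
  proof (rule ccontr)
    assume "\<not> ?thesis"
    then have "inv w i < inv w (Suc i)"
      using inv_Suc_neq[OF w, of i] by linarith
    then show False
      using card_inversions_simple_comp_ascent[OF w i] le len by linarith
  qed
  then have "reduced n ws (simple i \<circ> w)"
    using card_inversions_simple_comp_descent[OF w i] len \<open>is_word n ws\<close> ws
    by (simp add: reduced_iff)
  with i w desc show "i \<in> {1..<n} \<and> w permutes {1..n} \<and> inv w (Suc i) < inv w i \<and>
      reduced n ws (simple i \<circ> w)" by blast
next
  assume "i \<in> {1..<n} \<and> w permutes {1..n} \<and> inv w (Suc i) < inv w i \<and>
      reduced n ws (simple i \<circ> w)"
  then have i: "i \<in> {1..<n}" and w: "w permutes {1..n}" and desc: "inv w (Suc i) < inv w i"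
    and ws: "is_word n ws" "sprod ws = simple i \<circ> w"
      "length ws = card (inversions n (simple i \<circ> w))"
    by (simp_all add: reduced_iff)
  have "sprod (i # ws) = w"
    using ws(2) by simp
  moreover have "length (i # ws) = card (inversions n w)"
    using ws(3) card_inversions_simple_comp_descent[OF w i desc] by simp
  ultimately show "reduced n (i # ws) w"
    using i ws(1) by (simp add: reduced_iff)
qed

lemma reduced_ConsI:
  "reduced n r (simple i \<circ> w) \<Longrightarrow> i \<in> {1..<n} \<Longrightarrow> w permutes {1..n} \<Longrightarrow>
    inv w (Suc i) < inv w i \<Longrightarrow> reduced n (i # r) w"
  by (simp add: reduced_Cons_iff)

section \<open>Braid relations\<close>

text \<open>If \<open>s\<close> and \<open>t\<close> are both left descents of \<open>w\<close>, then \<open>w\<close> has reduced words starting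
  with either alternating word in \<open>s, t\<close> of length \<open>m(s, t)\<close>. This is what makes the
  induction on the length in Matsumoto's theorem go through.\<close>

lemma reduced_commuting_descents:
  assumes w: "w permutes {1..n}" and s: "s \<in> {1..<n}" and t: "t \<in> {1..<n}"
    and far: "Suc s < t \<or> Suc t < s"
    and desc: "inv w (Suc s) < inv w s" "inv w (Suc t) < inv w t"
  obtains r where "reduced n (s # t # r) w" and "reduced n (t # s # r) w"
proof -
  have sw: "simple s \<circ> w permutes {1..n}" and tw: "simple t \<circ> w permutes {1..n}"
    using simple_comp_permutes[OF w s] simple_comp_permutes[OF w t] .
  obtain r where r: "reduced n r (simple t \<circ> (simple s \<circ> w))"
    using reduced_redword[OF simple_comp_permutes[OF sw t]] by blast
  have "simple t \<circ> (simple s \<circ> w) = simple s \<circ> (simple t \<circ> w)"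
    using far by (auto simp: transpose_def)
  moreover have "inv (simple s \<circ> w) (Suc t) < inv (simple s \<circ> w) t"
    "inv (simple t \<circ> w) (Suc s) < inv (simple t \<circ> w) s"
    using desc far by (auto simp: inv_simple_comp[OF w] transpose_def)
  ultimately show thesis
    using r w s t sw tw desc by (metis that reduced_ConsI)
qed

lemma reduced_braid_descents:
  assumes w: "w permutes {1..n}" and s: "s \<in> {1..<n}" and s': "Suc s \<in> {1..<n}"
    and desc: "inv w (Suc s) < inv w s" "inv w (Suc (Suc s)) < inv w (Suc s)"
  obtains r where "reduced n (s # Suc s # s # r) w" and "reduced n (Suc s # s # Suc s # r) w"
proof -
  have sw: "simple s \<circ> w permutes {1..n}" and tw: "simple (Suc s) \<circ> w permutes {1..n}"
    using simple_comp_permutes[OF w s] simple_comp_permutes[OF w s'] .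
  have tsw: "simple (Suc s) \<circ> (simple s \<circ> w) permutes {1..n}"
    and stw: "simple s \<circ> (simple (Suc s) \<circ> w) permutes {1..n}"
    using simple_comp_permutes[OF sw s'] simple_comp_permutes[OF tw s] .
  obtain r where r: "reduced n r (simple s \<circ> (simple (Suc s) \<circ> (simple s \<circ> w)))"
    using reduced_redword[OF simple_comp_permutes[OF tsw s]] by blast
  have "simple s \<circ> (simple (Suc s) \<circ> (simple s \<circ> w)) =
      simple (Suc s) \<circ> (simple s \<circ> (simple (Suc s) \<circ> w))"
    by (auto simp: transpose_def)
  moreover have "inv (simple s \<circ> w) (Suc (Suc s)) < inv (simple s \<circ> w) (Suc s)"
    "inv (simple (Suc s) \<circ> (simple s \<circ> w)) (Suc s) <
      inv (simple (Suc s) \<circ> (simple s \<circ> w)) s"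
    "inv (simple (Suc s) \<circ> w) (Suc s) < inv (simple (Suc s) \<circ> w) s"
    "inv (simple s \<circ> (simple (Suc s) \<circ> w)) (Suc (Suc s)) <
      inv (simple s \<circ> (simple (Suc s) \<circ> w)) (Suc s)"
    using desc by (auto simp: inv_simple_comp[OF w] inv_simple_comp[OF sw] inv_simple_comp[OF tw]
        transpose_def)
  ultimately show thesis
    using r w s s' sw tw tsw stw desc by (metis that reduced_ConsI)
qed

locale braid_monoid =
  fixes n :: nat and T :: "nat \<Rightarrow> 'a::monoid_mult"
  assumes braid: "\<And>i. 1 \<le> i \<Longrightarrow> i + 1 < n \<Longrightarrow>
      T i * T (i + 1) * T i = T (i + 1) * T i * T (i + 1)"
    and commute: "\<And>i j. i \<in> {1..<n} \<Longrightarrow> j \<in> {1..<n} \<Longrightarrow> i + 2 \<le> j \<or> j + 2 \<le> i \<Longrightarrow>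
      T i * T j = T j * T i"
begin

lemma prod_reduced_words_eq:
  "reduced n ws1 w \<Longrightarrow> reduced n ws2 w \<Longrightarrow> prod_list (map T ws1) = prod_list (map T ws2)"
proof (induction "length ws1" arbitrary: ws1 ws2 w rule: less_induct)
  case less
  have head: "prod_list (map T (s # a)) = prod_list (map T (s # c))"
    if "reduced n (s # a) v" "reduced n (s # c) v" "length a < length ws1" for s a c v
    using less.hyps[of a "simple s \<circ> v" c] that by (simp add: reduced_Cons_iff)
  have len: "length ws2 = length ws1"
    using less.prems by (simp add: reduced_def)
  show ?case
  proof (cases ws1)
    case Nil
    with len show ?thesis by simp
  next
    case (Cons s a)
    with len obtain t b where ws2: "ws2 = t # b" and "length b < length ws1"
      by (cases ws2) auto
    have "length a < length ws1"
      using Cons by simp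
    note r1 = less.prems(1)[unfolded Cons] and r2 = less.prems(2)[unfolded ws2]
    then have w: "w permutes {1..n}" and s: "s \<in> {1..<n}" and t: "t \<in> {1..<n}"
      and desc: "inv w (Suc s) < inv w s" "inv w (Suc t) < inv w t"
      by (simp_all add: reduced_Cons_iff)
    consider "s = t" | "Suc s < t \<or> Suc t < s" | "t = Suc s" | "s = Suc t"
      by linarith
    then show ?thesis
    proof cases
      case 1
      then show ?thesis
        using head r1 r2 \<open>length a < length ws1\<close> Cons ws2 by blast
    next
      case 2
      then obtain r where "reduced n (s # t # r) w" "reduced n (t # s # r) w"
        using reduced_commuting_descents[OF w s t _ desc] by blast
      moreover have "T s * T t = T t * T s"
        using commute[OF s t] 2 by linarith
      ultimately show ?thesis
        using head[OF r1] head[OF r2] \<open>length a < length ws1\<close> \<open>length b < length ws1\<close>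
        unfolding Cons ws2 by (simp add: mult.assoc[symmetric])
    next
      case 3
      with t desc have "Suc s \<in> {1..<n}" "inv w (Suc (Suc s)) < inv w (Suc s)"
        by simp_all
      with 3 obtain r where "reduced n (s # t # s # r) w" "reduced n (t # s # t # r) w"
        using reduced_braid_descents[OF w s _ desc(1)] by blast
      moreover have "T s * T t * T s = T t * T s * T t"
        using braid[of s] s t 3 by simp
      ultimately show ?thesis
        using head[OF r1] head[OF r2] \<open>length a < length ws1\<close> \<open>length b < length ws1\<close>
        unfolding Cons ws2 by (simp add: mult.assoc[symmetric])
    next
      case 4
      with s desc have "Suc t \<in> {1..<n}" "inv w (Suc (Suc t)) < inv w (Suc t)"
        by simp_all
      with 4 obtain r where "reduced n (t # s # t # r) w" "reduced n (s # t # s # r) w"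
        using reduced_braid_descents[OF w t _ desc(2)] by blast
      moreover have "T s * T t * T s = T t * T s * T t"
        using braid[of t] s t 4 by simp
      ultimately show ?thesis
        using head[OF r1] head[OF r2] \<open>length a < length ws1\<close> \<open>length b < length ws1\<close>
        unfolding Cons ws2 by (simp add: mult.assoc[symmetric])
    qed
  qed
qed

end

section \<open>Bruhat order\<close>

text \<open>The involution \<open>f\<close> maps inversions of \<open>x\<close> injectively to inversions of
  \<open>x \<circ> (a b)\<close> other than \<open>(a, b)\<close>: pairs with one end in \<open>{a, b}\<close> and the other strictly
  between \<open>a\<close> and \<open>b\<close> stay fixed, all other pairs are moved by \<open>(a b)\<close>.\<close>

lemma card_inversions_comp_transpose_less:
  assumes x: "x permutes {1..n}" and ab: "1 \<le> a" "a < b" "b \<le> n" and xab: "x a < x b"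
  shows "card (inversions n x) < card (inversions n (x \<circ> transpose a b))"
proof -
  define \<tau> where "\<tau> = transpose a b"
  define y where "y = x \<circ> \<tau>"
  define C where "C = (\<lambda>(p, q). (p \<in> {a, b} \<and> a < q \<and> q < b) \<or> (q \<in> {a, b} \<and> a < p \<and> p < b))"
  define f where "f = (\<lambda>z. if C z then z else (\<tau> (fst z), \<tau> (snd z)))"
  have \<tau>\<tau>: "\<tau> (\<tau> p) = p" for p
    by (simp add: \<tau>_def)
  have "C (\<tau> p, \<tau> q) = C (p, q)" for p q
    unfolding C_def \<tau>_def using ab by (auto simp: transpose_def)
  then have "f (f z) = z" for z
    unfolding f_def using \<tau>\<tau> by (auto split: prod.splits)
  then have "inj f"
    by (metis injI)
  have "f ` inversions n x \<subseteq> inversions n y - {(a, b)}"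
  proof
    fix z
    assume "z \<in> f ` inversions n x"
    then obtain p q where pq: "(p, q) \<in> inversions n x" and z: "z = f (p, q)"
      by auto
    from pq have pq': "1 \<le> p" "p < q" "q \<le> n" "x q < x p"
      by (simp_all add: inversions_def)
    show "z \<in> inversions n y - {(a, b)}"
    proof (cases "C (p, q)")
      case True
      moreover have "y p = (if p = a then x b else if p = b then x a else x p)"
        "y q = (if q = a then x b else if q = b then x a else x q)"
        by (auto simp: y_def \<tau>_def)
      ultimately show ?thesis
        unfolding z f_def using pq' ab xab by (auto simp: C_def inversions_def)
    next
      case False
      have "(p, q) \<noteq> (a, b)"
        using pq' xab by auto
      with False pq' ab have "\<tau> p < \<tau> q" "1 \<le> \<tau> p" "\<tau> q \<le> n" "(\<tau> p, \<tau> q) \<noteq> (a, b)"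
        unfolding C_def \<tau>_def by (auto simp: transpose_def)
      with False show ?thesis
        unfolding z f_def using pq' by (simp add: inversions_def y_def \<tau>\<tau>)
    qed
  qed
  moreover have "(a, b) \<in> inversions n y"
    using ab xab by (simp add: inversions_def y_def \<tau>_def)
  ultimately have "card (f ` inversions n x) < card (inversions n y)"
    using card_mono[of "inversions n y - {(a, b)}"] card_Diff1_less[of "inversions n y"]
    by (meson finite_Diff finite_inversions le_less_trans)
  then show ?thesis
    using card_image[OF inj_on_subset[OF \<open>inj f\<close>]] by (simp add: y_def \<tau>_def)
qed

lemma bruhat_step_comp_transpose:
  assumes x: "x permutes {1..n}" and ab: "1 \<le> a" "a < b" "b \<le> n" and "x a < x b"
  shows "bruhat_step n x (x \<circ> transpose a b)"
proof -
  have "x \<circ> transpose a b permutes {1..n}"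
    using ab by (intro permutes_compose[OF permutes_swap_id x]) auto
  with card_inversions_comp_transpose_less[OF assms] show ?thesis
    unfolding bruhat_step_def using x ab by (auto simp: plen_eq_card_inversions)
qed

lemma bruhat_stepE:
  assumes "bruhat_step n u w"
  obtains a b where "1 \<le> a" "a < b" "b \<le> n" "w = u \<circ> transpose a b" "u a < u b"
    "u permutes {1..n}"
proof -
  from assms obtain a b where u: "u permutes {1..n}" and ab: "1 \<le> a" "a < b" "b \<le> n"
    and w: "w = u \<circ> transpose a b" and lt: "plen n u < plen n w"
    unfolding bruhat_step_def by blast
  have wp: "w permutes {1..n}"
    unfolding w using ab by (intro permutes_compose[OF permutes_swap_id u]) auto
  have "u a \<noteq> u b"
    using permutes_inj[OF u] ab by (auto dest: injD)
  moreover have "\<not> u b < u a"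
  proof
    assume "u b < u a"
    then have "w a < w b"
      by (simp add: w)
    have "w \<circ> transpose a b = u"
      by (simp add: w comp_assoc)
    with card_inversions_comp_transpose_less[OF wp ab \<open>w a < w b\<close>] lt show False
      by (simp add: plen_eq_card_inversions[OF u] plen_eq_card_inversions[OF wp])
  qed
  ultimately have "u a < u b" by simp
  with that ab w u show thesis by blast
qed

lemma bruhat_step_simple_comp:
  assumes x: "x permutes {1..n}" and i: "i \<in> {1..<n}" and asc: "inv x i < inv x (Suc i)"
  shows "bruhat_step n x (simple i \<circ> x)"
proof -
  have "inv x i \<in> {1..n}" "inv x (Suc i) \<in> {1..n}"
    using i permutes_in_image[OF permutes_inv[OF x], of i]
      permutes_in_image[OF permutes_inv[OF x], of "Suc i"] by simp_all
  moreover have "x (inv x i) < x (inv x (Suc i))"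
    by (simp add: permutes_inverses[OF x])
  ultimately have "bruhat_step n x (x \<circ> transpose (inv x i) (inv x (Suc i)))"
    using asc by (intro bruhat_step_comp_transpose[OF x]) simp_all
  then show ?thesis
    by (simp add: transpose_comp_eq[OF permutes_bij[OF x]])
qed

lemma bruhat_step_simple_comp_cases:
  assumes step: "bruhat_step n u w" and i: "i \<in> {1..<n}"
  shows "w = simple i \<circ> u \<or> bruhat_step n (simple i \<circ> u) (simple i \<circ> w)"
proof -
  obtain a b where ab: "1 \<le> a" "a < b" "b \<le> n" and w: "w = u \<circ> transpose a b"
    and lt: "u a < u b" and u: "u permutes {1..n}"
    using bruhat_stepE[OF step] by blast
  show ?thesis
  proof (cases "u a = i \<and> u b = Suc i")
    case True
    then have "inv u i = a" "inv u (Suc i) = b"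
      using permutes_inverses(2)[OF u] by metis+
    then have "simple i \<circ> u = u \<circ> transpose a b"
      using transpose_comp_eq[OF permutes_bij[OF u], of i "Suc i"] by simp
    with w show ?thesis by simp
  next
    case False
    have "simple i (u a) < simple i (u b)"
      using simple_less_iff[of "u a" "u b" i] False lt by (auto simp: doubleton_eq_iff)
    then have "bruhat_step n (simple i \<circ> u) (simple i \<circ> u \<circ> transpose a b)"
      using bruhat_step_comp_transpose[OF simple_comp_permutes[OF u i] ab] by simp
    with w show ?thesis
      by (simp add: comp_assoc)
  qed
qed

lemma bruhat_lt_trans: "bruhat_lt n u v \<Longrightarrow> bruhat_lt n v w \<Longrightarrow> bruhat_lt n u w"
  unfolding bruhat_lt_def by (rule tranclp_trans)

lemma bruhat_lt_simple_comp:
  assumes lt: "bruhat_lt n u w" and i: "i \<in> {1..<n}" and w: "w permutes {1..n}"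
    and asc: "inv w i < inv w (Suc i)"
  shows "bruhat_lt n (simple i \<circ> u) (simple i \<circ> w)"
proof -
  have top: "bruhat_lt n w (simple i \<circ> w)"
    unfolding bruhat_lt_def using bruhat_step_simple_comp[OF w i asc] by blast
  from lt[unfolded bruhat_lt_def] show ?thesis
  proof (induction rule: converse_tranclp_induct)
    case (base v)
    from bruhat_step_simple_comp_cases[OF base i] show ?case
    proof
      assume "w = simple i \<circ> v"
      then have "simple i \<circ> v = w"
        by simp
      with top show ?thesis
        by (simp only:)
    qed (unfold bruhat_lt_def, rule tranclp.r_into_trancl)
  next
    case (step v v')
    from bruhat_step_simple_comp_cases[OF step(1) i] show ?case
    proof
      assume "v' = simple i \<circ> v"
      then have "simple i \<circ> v = v'"
        by simp
      with step(2) top show ?thesis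
        unfolding bruhat_lt_def by (simp only: tranclp_trans)
    next
      assume "bruhat_step n (simple i \<circ> v) (simple i \<circ> v')"
      then show ?thesis
        using step(3) unfolding bruhat_lt_def by (rule tranclp_into_tranclp2)
    qed
  qed
qed

definition bruhat_below :: "nat \<Rightarrow> (nat \<Rightarrow> nat) \<Rightarrow> (nat \<Rightarrow> nat) set" where
  "bruhat_below n w = {v. v permutes {1..n} \<and> bruhat_lt n v w}"

lemma bruhat_below_subset: "v \<in> bruhat_below n w \<Longrightarrow> bruhat_below n v \<subseteq> bruhat_below n w"
  unfolding bruhat_below_def using bruhat_lt_trans by blast

lemma simple_comp_mem_bruhat_below:
  "w permutes {1..n} \<Longrightarrow> i \<in> {1..<n} \<Longrightarrow> inv w (Suc i) < inv w i \<Longrightarrow>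
    simple i \<circ> w \<in> bruhat_below n w"
proof -
  assume w: "w permutes {1..n}" and i: "i \<in> {1..<n}" and desc: "inv w (Suc i) < inv w i"
  have "inv (simple i \<circ> w) i < inv (simple i \<circ> w) (Suc i)"
    using desc by (simp add: inv_simple_comp[OF w])
  from bruhat_step_simple_comp[OF simple_comp_permutes[OF w i] i this]
  show "simple i \<circ> w \<in> bruhat_below n w"
    using simple_comp_permutes[OF w i] unfolding bruhat_below_def bruhat_lt_def by auto
qed

lemma mem_bruhat_below_simple_comp:
  assumes v: "v permutes {1..n}" and i: "i \<in> {1..<n}" and asc: "inv v i < inv v (Suc i)"
  shows "v \<in> bruhat_below n (simple i \<circ> v)"
  using simple_comp_mem_bruhat_below[OF simple_comp_permutes[OF v i] i] asc
  by (simp add: inv_simple_comp[OF v])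

section \<open>Algebras over \<open>R\<close> and left spans\<close>

lemma mult_rinv:
  fixes x :: "'r::idom"
  assumes "x * y = 1"
  shows "x * rinv x = 1"
  unfolding rinv_def
proof (rule theI)
  show "x * y = 1" by fact
next
  fix z
  assume "x * z = 1"
  with assms show "z = y"
    by (metis mult.left_commute mult_1_right)
qed

locale R_algebra =
  fixes \<phi> :: "'r::idom \<Rightarrow> 'a::ring_1"
  assumes is_R_algebra: "is_R_algebra \<phi>"
begin

lemma hom_one: "\<phi> 1 = 1"
  and hom_add: "\<phi> (x + y) = \<phi> x + \<phi> y"
  and hom_mult: "\<phi> (x * y) = \<phi> x * \<phi> y"
  and hom_commute: "\<phi> x * a = a * \<phi> x"
  using is_R_algebra unfolding is_R_algebra_def by blast+

lemma hom_zero: "\<phi> 0 = 0"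
  using hom_add[of 0 0] by simp

lemma hom_diff: "\<phi> (x - y) = \<phi> x - \<phi> y"
  using hom_add[of "x - y" y] by (simp add: eq_diff_eq)

lemma Rt_zero: "0 \<in> Rt \<phi> t n"
  using Rt.scal[of \<phi> 0] by (simp add: hom_zero)

lemma Rt_one: "1 \<in> Rt \<phi> t n"
  using Rt.scal[of \<phi> 1] by (simp add: hom_one)

lemma Rt_diff: "x \<in> Rt \<phi> t n \<Longrightarrow> y \<in> Rt \<phi> t n \<Longrightarrow> x - y \<in> Rt \<phi> t n"
  using Rt.add[OF _ Rt.neg] by (metis diff_conv_add_uminus)

lemma Rt_sum: "(\<And>x. x \<in> A \<Longrightarrow> f x \<in> Rt \<phi> t n) \<Longrightarrow> sum f A \<in> Rt \<phi> t n"
  by (induction A rule: infinite_finite_induct) (simp_all add: Rt_zero Rt.add)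

lemma Rt_prod_list: "(\<And>x. x \<in> set xs \<Longrightarrow> x \<in> Rt \<phi> t n) \<Longrightarrow> prod_list xs \<in> Rt \<phi> t n"
  by (induction xs) (simp_all add: Rt_one Rt.mult)

lemma Rt_power: "x \<in> Rt \<phi> t n \<Longrightarrow> x ^ k \<in> Rt \<phi> t n"
  by (induction k) (simp_all add: Rt_one Rt.mult)

lemma Rt_peval: "x \<in> Rt \<phi> t n \<Longrightarrow> peval \<phi> p x \<in> Rt \<phi> t n"
  unfolding peval_def by (intro Rt_sum Rt.mult Rt.scal Rt_power)

end

inductive_set left_span :: "'a::semiring_0 set \<Rightarrow> ('b \<Rightarrow> 'a) \<Rightarrow> 'b set \<Rightarrow> 'a set"
  for C e V where
  zero: "0 \<in> left_span C e V"
| scaled: "c \<in> C \<Longrightarrow> v \<in> V \<Longrightarrow> c * e v \<in> left_span C e V"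
| add: "x \<in> left_span C e V \<Longrightarrow> y \<in> left_span C e V \<Longrightarrow> x + y \<in> left_span C e V"

lemma left_span_mono: "x \<in> left_span C e V \<Longrightarrow> V \<subseteq> W \<Longrightarrow> x \<in> left_span C e W"
  by (induction rule: left_span.induct) (auto intro: left_span.intros)

lemma left_span_mult:
  assumes "x \<in> left_span C e V" and "c \<in> C" and "\<And>a b. a \<in> C \<Longrightarrow> b \<in> C \<Longrightarrow> a * b \<in> C"
  shows "c * x \<in> left_span C e V"
  using assms(1)
proof (induction rule: left_span.induct)
  case (scaled d v)
  then have "(c * d) * e v \<in> left_span C e V"
    by (intro left_span.scaled assms(2,3))
  then show ?case
    by (simp add: mult.assoc)
qed (simp_all add: distrib_left left_span.intros)

lemma left_span_sum:
  assumes "x \<in> left_span C e V" and "finite V" and "0 \<in> C"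
    and "\<And>a b. a \<in> C \<Longrightarrow> b \<in> C \<Longrightarrow> a + b \<in> C"
  shows "\<exists>f. (\<forall>v. f v \<in> C) \<and> x = (\<Sum>v\<in>V. f v * e v)"
  using assms(1)
proof (induction rule: left_span.induct)
  case zero
  show ?case
    using assms(3) by (intro exI[of _ "\<lambda>_. 0"]) simp
next
  case (scaled c v)
  have "(\<Sum>v'\<in>V. (if v' = v then c else 0) * e v') = c * e v"
    using scaled(2) assms(2) by (simp add: if_distrib[of "\<lambda>a. a * _"] sum.delta' cong: if_cong)
  then show ?case
    using scaled(1) assms(3) by (intro exI[of _ "\<lambda>v'. if v' = v then c else 0"]) auto
next
  case (add x y)
  then obtain f g where "\<forall>v. f v \<in> C" "x = (\<Sum>v\<in>V. f v * e v)"
    "\<forall>v. g v \<in> C" "y = (\<Sum>v\<in>V. g v * e v)"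
    by blast
  then show ?case
    using assms(4) by (intro exI[of _ "\<lambda>v. f v + g v"]) (simp add: distrib_right sum.distrib)
qed

section \<open>The modified Ariki-Koike algebra\<close>

locale shoji = R_algebra \<phi> for \<phi> :: "'r::idom \<Rightarrow> 'a::ring_1" +
  fixes n r :: nat and q :: 'r and u :: "nat \<Rightarrow> 'r" and t T :: "nat \<Rightarrow> 'a"
  assumes relations: "shoji_relations n r q u \<phi> t T"
    and q_unit: "\<exists>y. q * y = 1"
begin

abbreviation RT :: "'a set" where
  "RT \<equiv> Rt \<phi> t n"

lemma Rt_mixterm: "j \<in> {2..n} \<Longrightarrow> mixterm r q u \<phi> t j \<in> RT"
  unfolding mixterm_def
  by (intro Rt.mult Rt.scal Rt_sum) (auto intro!: Rt.mult Rt.scal Rt_peval Rt.gen_t)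

lemma Rt_Bp: "Bp n r q u \<phi> t i j \<in> RT"
  unfolding Bp_def bk_def
  by (intro Rt.mult Rt.scal Rt_sum Rt_prod_list)
     (auto intro!: Rt.mult Rt.scal Rt_prod_list Rt_diff Rt.gen_t)

lemma T_mult_t:
  assumes j: "j \<in> {1..<n}" and k: "k \<in> {1..n}"
  shows "\<exists>a\<in>RT. \<exists>b\<in>RT. T j * t k = a * T j + b"
proof -
  note R = relations[unfolded shoji_relations_def]
  have j': "Suc j \<in> {2..n}"
    using j by simp
  consider "k = Suc j" | "k = j" | "k \<noteq> j" "k \<noteq> Suc j"
    by blast
  then show ?thesis
  proof cases
    case 1
    have "T j * t (Suc j) = t j * T j + mixterm r q u \<phi> t (Suc j)"
      using R j' by fastforce
    moreover have "t j \<in> RT"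
      using j by (intro Rt.gen_t) simp
    ultimately show ?thesis
      using 1 Rt_mixterm[OF j'] by blast
  next
    case 2
    have "T j * t j = t (Suc j) * T j + - mixterm r q u \<phi> t (Suc j)"
      using R j' by fastforce
    moreover have "t (Suc j) \<in> RT"
      using j by (intro Rt.gen_t) simp
    ultimately show ?thesis
      using 2 Rt.neg[OF Rt_mixterm[OF j']] by blast
  next
    case 3
    then have "T j * t k = t k * T j"
      using R j k by simp
    then show ?thesis
      using Rt.gen_t[OF k] Rt_zero by (metis add.right_neutral)
  qed
qed

lemma T_mult_Rt:
  assumes j: "j \<in> {1..<n}" and x: "x \<in> RT"
  shows "\<exists>a\<in>RT. \<exists>b\<in>RT. T j * x = a * T j + b"
  using x
proof (induction rule: Rt.induct)
  case (scal c)
  have "T j * \<phi> c = \<phi> c * T j + 0"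
    by (simp add: hom_commute)
  then show ?case
    using Rt.scal Rt_zero by blast
next
  case (gen_t k)
  then show ?case
    by (rule T_mult_t[OF j])
next
  case (add x y)
  then obtain a b c d where ab: "a \<in> RT" "b \<in> RT" "T j * x = a * T j + b"
    and cd: "c \<in> RT" "d \<in> RT" "T j * y = c * T j + d"
    by blast
  then have "T j * (x + y) = (a + c) * T j + (b + d)"
    by (simp add: algebra_simps)
  then show ?case
    using Rt.add[OF ab(1) cd(1)] Rt.add[OF ab(2) cd(2)] by blast
next
  case (mult x y)
  then obtain a b c d where ab: "a \<in> RT" "b \<in> RT" "T j * x = a * T j + b"
    and cd: "c \<in> RT" "d \<in> RT" "T j * y = c * T j + d"
    by blast
  have "T j * (x * y) = a * (T j * y) + b * y"
    by (simp add: ab(3) algebra_simps flip: mult.assoc)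
  also have "\<dots> = (a * c) * T j + (a * d + b * y)"
    by (simp add: cd(3) algebra_simps)
  finally show ?case
    using Rt.mult[OF ab(1) cd(1)] Rt.add[OF Rt.mult[OF ab(1) cd(2)] Rt.mult[OF ab(2) mult.hyps(2)]]
    by blast
next
  case (neg x)
  then obtain a b where "a \<in> RT" "b \<in> RT" "T j * x = a * T j + b"
    by blast
  then have "T j * - x = - a * T j + - b" "- a \<in> RT" "- b \<in> RT"
    by (simp_all add: Rt.neg)
  then show ?case
    by blast
qed

lemma T_square: "i \<in> {1..<n} \<Longrightarrow> T i * T i = \<phi> (q - rinv q) * T i + 1"
proof -
  assume i: "i \<in> {1..<n}"
  have "(T i - \<phi> q) * (T i + \<phi> (rinv q)) = 0"
    using relations i unfolding shoji_relations_def by blast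
  moreover have "\<phi> q * \<phi> (rinv q) = 1"
    using q_unit mult_rinv hom_mult hom_one by metis
  ultimately show ?thesis
    by (simp add: algebra_simps hom_diff hom_commute[of _ "T i"] eq_neg_iff_add_eq_0)
qed

sublocale braid_monoid n T
  using relations unfolding shoji_relations_def braid_monoid_def by auto

lemma prod_reduced_word_eq_Tw: "reduced n ws w \<Longrightarrow> prod_list (map T ws) = Tw n T w"
  unfolding Tw_def by (metis prod_reduced_words_eq reduced_permutes reduced_redword)

lemma T_mult_Tw_ascent:
  assumes v: "v permutes {1..n}" and i: "i \<in> {1..<n}" and asc: "inv v i < inv v (Suc i)"
  shows "T i * Tw n T v = Tw n T (simple i \<circ> v)"
proof -
  have "inv (simple i \<circ> v) (Suc i) < inv (simple i \<circ> v) i"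
    using asc by (simp add: inv_simple_comp[OF v])
  then have "reduced n (i # redword n v) (simple i \<circ> v)"
    using reduced_redword[OF v] simple_comp_permutes[OF v i] i by (intro reduced_ConsI) simp_all
  from prod_reduced_word_eq_Tw[OF this] show ?thesis
    by (simp add: Tw_def)
qed

lemma T_mult_Tw_descent:
  assumes v: "v permutes {1..n}" and i: "i \<in> {1..<n}" and desc: "inv v (Suc i) < inv v i"
  shows "T i * Tw n T v = \<phi> (q - rinv q) * Tw n T v + Tw n T (simple i \<circ> v)"
proof -
  have "inv (simple i \<circ> v) i < inv (simple i \<circ> v) (Suc i)"
    using desc by (simp add: inv_simple_comp[OF v])
  from T_mult_Tw_ascent[OF simple_comp_permutes[OF v i] i this]
  have Tv: "Tw n T v = T i * Tw n T (simple i \<circ> v)"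
    by simp
  have "T i * Tw n T v = (T i * T i) * Tw n T (simple i \<circ> v)"
    by (simp add: Tv mult.assoc)
  also have "\<dots> = \<phi> (q - rinv q) * Tw n T v + Tw n T (simple i \<circ> v)"
    by (simp add: T_square[OF i] Tv distrib_right mult.assoc)
  finally show ?thesis .
qed

abbreviation span :: "(nat \<Rightarrow> nat) set \<Rightarrow> 'a set" where
  "span V \<equiv> left_span RT (Tw n T) V"

lemma T_mult_Tw_mem_span:
  assumes v': "v' \<in> bruhat_below n v" and v: "v permutes {1..n}" and i: "i \<in> {1..<n}"
    and asc: "inv v i < inv v (Suc i)"
  shows "T i * Tw n T v' \<in> span (bruhat_below n (simple i \<circ> v))"
proof -
  have v'p: "v' permutes {1..n}" and "bruhat_lt n v' v"
    using v' by (simp_all add: bruhat_below_def)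
  show ?thesis
  proof (cases "inv v' i < inv v' (Suc i)")
    case True
    have "simple i \<circ> v' \<in> bruhat_below n (simple i \<circ> v)"
      using bruhat_lt_simple_comp[OF \<open>bruhat_lt n v' v\<close> i v asc] simple_comp_permutes[OF v'p i]
      by (simp add: bruhat_below_def)
    from left_span.scaled[OF Rt_one this] show ?thesis
      by (simp add: T_mult_Tw_ascent[OF v'p i True])
  next
    case False
    then have desc: "inv v' (Suc i) < inv v' i"
      using inv_Suc_neq[OF v'p, of i] by linarith
    have "v' \<in> bruhat_below n (simple i \<circ> v)"
      using v' bruhat_below_subset[OF mem_bruhat_below_simple_comp[OF v i asc]] by blast
    moreover have "simple i \<circ> v' \<in> bruhat_below n (simple i \<circ> v)"
      using simple_comp_mem_bruhat_below[OF v'p i desc] bruhat_below_subset calculation by blast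
    ultimately show ?thesis
      unfolding T_mult_Tw_descent[OF v'p i desc]
      by (intro left_span.add left_span.scaled[OF Rt.scal] left_span.scaled[OF Rt_one, simplified])
  qed
qed

lemma T_mult_span:
  assumes x: "x \<in> span (bruhat_below n v)" and v: "v permutes {1..n}" and i: "i \<in> {1..<n}"
    and asc: "inv v i < inv v (Suc i)"
  shows "T i * x \<in> span (bruhat_below n (simple i \<circ> v))"
  using x
proof (induction rule: left_span.induct)
  case zero
  then show ?case
    by (simp add: left_span.zero)
next
  case (scaled c v')
  obtain a b where "a \<in> RT" "b \<in> RT" and Tc: "T i * c = a * T i + b"
    using T_mult_Rt[OF i scaled(1)] by blast
  have "v' \<in> bruhat_below n (simple i \<circ> v)"
    using scaled(2) bruhat_below_subset[OF mem_bruhat_below_simple_comp[OF v i asc]] by blast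
  then have "b * Tw n T v' \<in> span (bruhat_below n (simple i \<circ> v))"
    by (rule left_span.scaled[OF \<open>b \<in> RT\<close>])
  moreover have "a * (T i * Tw n T v') \<in> span (bruhat_below n (simple i \<circ> v))"
    using left_span_mult[OF T_mult_Tw_mem_span[OF scaled(2) v i asc] \<open>a \<in> RT\<close> Rt.mult] .
  moreover have "T i * (c * Tw n T v') = a * (T i * Tw n T v') + b * Tw n T v'"
    by (simp add: Tc distrib_right flip: mult.assoc)
  ultimately show ?case
    by (metis left_span.add)
next
  case (add x y)
  then show ?case
    unfolding distrib_left by (intro left_span.add)
qed

lemma gen_word_minus_T_word_mem_span:
  "reduced n ws w \<Longrightarrow>
    prod_list (map (gen n r q u \<phi> t T) ws) - prod_list (map T ws) \<in> span (bruhat_below n w)"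
proof (induction ws arbitrary: w)
  case Nil
  then show ?case
    by (simp add: left_span.zero)
next
  case (Cons i ws)
  then have w: "w permutes {1..n}" and i: "i \<in> {1..<n}" and desc: "inv w (Suc i) < inv w i"
    and ws: "reduced n ws (simple i \<circ> w)"
    by (simp_all add: reduced_Cons_iff)
  define v where "v = simple i \<circ> w"
  define X where "X = prod_list (map (gen n r q u \<phi> t T) ws) - prod_list (map T ws)"
  define B where "B = Bp n r q u \<phi> t i (i + 1)"
  have v: "v permutes {1..n}" and asc: "inv v i < inv v (Suc i)" and w_eq: "simple i \<circ> v = w"
    using simple_comp_permutes[OF w i] desc by (simp_all add: v_def inv_simple_comp[OF w])
  have vw: "v \<in> bruhat_below n w"
    unfolding v_def by (rule simple_comp_mem_bruhat_below[OF w i desc])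
  have X: "X \<in> span (bruhat_below n v)"
    unfolding X_def v_def by (rule Cons.IH[OF ws])
  have Tws: "prod_list (map T ws) = Tw n T v"
    unfolding v_def by (rule prod_reduced_word_eq_Tw[OF ws])
  have "prod_list (map (gen n r q u \<phi> t T) (i # ws)) - prod_list (map T (i # ws)) =
      T i * X + (B * Tw n T v + B * X)"
    by (simp add: gen_def B_def X_def Tws algebra_simps)
  moreover have "T i * X \<in> span (bruhat_below n w)"
    using T_mult_span[OF X v i asc] w_eq by simp
  moreover have "B * Tw n T v \<in> span (bruhat_below n w)"
    using left_span.scaled[OF Rt_Bp vw] by (simp add: B_def)
  moreover have "B * X \<in> span (bruhat_below n w)"
    using left_span_mono[OF left_span_mult[OF X Rt_Bp Rt.mult] bruhat_below_subset[OF vw]]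
    by (simp add: B_def)
  ultimately show ?case
    by (simp add: left_span.add)
qed

end

theorem lemma3p8:
  fixes \<phi> :: "'r::idom \<Rightarrow> 'a::ring_1"
    and n r :: nat and q :: 'r and u :: "nat \<Rightarrow> 'r"
    and t T :: "nat \<Rightarrow> 'a" and w :: "nat \<Rightarrow> nat"
  assumes "n \<ge> 2" and "r \<ge> 1"
    and "\<exists>y. q * y = 1" and "\<exists>y. Delta r u * y = 1"
    and "is_R_algebra \<phi>"
    and "shoji_relations n r q u \<phi> t T"
    and "w permutes {1..n}"
  shows "gw n r q u \<phi> t T w - Tw n T w \<in>
    {\<Sum>w'\<in>{w'. w' permutes {1..n} \<and> bruhat_lt n w' w}. f w' * Tw n T w' | f.
       \<forall>w'. f w' \<in> Rt \<phi> t n}"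
proof -
  interpret shoji \<phi> n r q u t T
    using assms(3,5,6) by unfold_locales
  have reduced: "reduced n (redword n w) w"
    by (rule reduced_redword[OF assms(7)])
  have "gw n r q u \<phi> t T w - Tw n T w \<in> span (bruhat_below n w)"
    using gen_word_minus_T_word_mem_span[OF reduced] prod_reduced_word_eq_Tw[OF reduced]
    by (simp add: gw_def)
  moreover have "finite (bruhat_below n w)"
    by (rule finite_subset[OF _ finite_permutations[of "{1..n}"]]) (auto simp: bruhat_below_def)
  ultimately obtain f where "\<forall>v. f v \<in> RT"
    "gw n r q u \<phi> t T w - Tw n T w = (\<Sum>v\<in>bruhat_below n w. f v * Tw n T v)"
    using left_span_sum[OF _ _ Rt_zero Rt.add] by blast
  then show ?thesis
    unfolding bruhat_below_def by blast
qed

end
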